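(* Let $n\ge1$ and let $A$ be a set equipped with an $(n+1)$-ary operation $\theta$, binary operations $\alpha_1,\dots,\alpha_n$ and an element $e\in A$ such that for all $a,b\in A$: $$\alpha_i(a,a)=e\ (1\le i\le n),\qquad \theta(\alpha_1(a,b),\dots,\alpha_n(a,b),b)=a,$$ and such that $\theta$ is 2-associative, i.e. for all $a_1,\dots,a_n,b_1,\dots,b_n,c\in A$, $$\theta(a_1,\dots,a_n,\theta(b_1,\dots,b_n,c))=\theta(\theta(a_1,\dots,a_n,b_1),\dots,\theta(a_1,\dots,a_n,b_n),c).$$ Then $A$ with the binary operation $ab=\theta(a,a,\dots,a,b)$ is a group, and for every $b\in A$, $$b^{-1}=\theta\big(\alpha_1(e,\theta(b,b,\dots,b)),\alpha_2(e,\theta(b,b,\dots,b)),\dots,\alpha_n(e,\theta(b,b,\dots,b)),b\big).$$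
   Context: Here $\theta(b,b,\dots,b)$ denotes $\theta$ applied to $n+1$ copies of $b$, and $\theta(a,a,\dots,a,b)$ denotes $\theta$ with $a$ in the first $n$ arguments and $b$ in the last. *)

theory Defs
  imports "HOL-Algebra.Group"
begin

definition theta_mult :: "nat \<Rightarrow> ('a list \<Rightarrow> 'a) \<Rightarrow> 'a \<Rightarrow> 'a \<Rightarrow> 'a" where
  "theta_mult n \<theta> a b = \<theta> (replicate n a @ [b])"

end

theory Submission
  imports Defs
begin

text \<open>2-associativity with all the inner arguments equal says exactly that
  \<open>ab = \<theta>(a,\<dots>,a,b)\<close> is associative. The \<open>\<alpha>\<^sub>i\<close> make \<open>e\<close> a left identity, since
  \<open>\<theta>(e,\<dots>,e,b) = \<theta>(\<alpha>\<^sub>1(b,b),\<dots>,\<alpha>\<^sub>n(b,b),b) = b\<close>. For a left inverse of \<open>b\<close>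
  put \<open>a\<^sub>i = \<alpha>\<^sub>i(e, \<theta>(b,\<dots>,b))\<close>: then \<open>\<theta>(a\<^sub>1,\<dots>,a\<^sub>n,\<theta>(b,\<dots>,b,b)) = e\<close>, and
  2-associativity turns the left-hand side into \<open>\<theta>(c,\<dots>,c,b) = cb\<close> with
  \<open>c = \<theta>(a\<^sub>1,\<dots>,a\<^sub>n,b)\<close>. A semigroup with a left identity and left inverses is a
  group, and \<open>c\<close> is the inverse of \<open>b\<close>.\<close>

locale two_associative =
  fixes A :: "'a set" and \<theta> :: "'a list \<Rightarrow> 'a" and n :: nat
  assumes theta_closed: "\<lbrakk>length xs = Suc n; set xs \<subseteq> A\<rbrakk> \<Longrightarrow> \<theta> xs \<in> A"
    and theta_two_assoc:
      "\<lbrakk>length as = n; length bs = n; set as \<subseteq> A; set bs \<subseteq> A; c \<in> A\<rbrakk> \<Longrightarrow>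
        \<theta> (as @ [\<theta> (bs @ [c])]) = \<theta> (map (\<lambda>b. \<theta> (as @ [b])) bs @ [c])"
begin

lemma replicate_subset: "a \<in> A \<Longrightarrow> set (replicate m a) \<subseteq> A"
  by (induction m) auto

lemma theta_replicate_closed:
  "\<lbrakk>a \<in> A; b \<in> A\<rbrakk> \<Longrightarrow> \<theta> (replicate n a @ [b]) \<in> A"
  by (rule theta_closed) (auto simp: replicate_subset)

lemma theta_replicate_Suc_closed: "b \<in> A \<Longrightarrow> \<theta> (replicate (Suc n) b) \<in> A"
  by (rule theta_closed) (simp_all only: length_replicate replicate_subset)

lemma theta_mult_closed: "\<lbrakk>a \<in> A; b \<in> A\<rbrakk> \<Longrightarrow> theta_mult n \<theta> a b \<in> A"
  by (simp add: theta_mult_def theta_replicate_closed)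

lemma theta_mult_assoc:
  assumes "a \<in> A" "b \<in> A" "c \<in> A"
  shows "theta_mult n \<theta> (theta_mult n \<theta> a b) c = theta_mult n \<theta> a (theta_mult n \<theta> b c)"
  using theta_two_assoc[of "replicate n a" "replicate n b" c] assms
  by (simp add: theta_mult_def replicate_subset)

end

locale two_associative_with_division = two_associative +
  fixes \<alpha> :: "nat \<Rightarrow> 'a \<Rightarrow> 'a \<Rightarrow> 'a" and e :: 'a
  assumes e_closed: "e \<in> A"
    and alpha_closed: "\<lbrakk>i < n; a \<in> A; b \<in> A\<rbrakk> \<Longrightarrow> \<alpha> i a b \<in> A"
    and alpha_diag: "\<lbrakk>i < n; a \<in> A\<rbrakk> \<Longrightarrow> \<alpha> i a a = e"
    and theta_alpha: "\<lbrakk>a \<in> A; b \<in> A\<rbrakk> \<Longrightarrow> \<theta> (map (\<lambda>i. \<alpha> i a b) [0..<n] @ [b]) = a"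
begin

definition theta_group :: "'a monoid" where
  "theta_group = \<lparr>carrier = A, mult = theta_mult n \<theta>, one = e\<rparr>"

definition theta_inv :: "'a \<Rightarrow> 'a" where
  "theta_inv b = \<theta> (map (\<lambda>i. \<alpha> i e (\<theta> (replicate (Suc n) b))) [0..<n] @ [b])"

lemma theta_mult_e_left:
  assumes "b \<in> A"
  shows "theta_mult n \<theta> e b = b"
proof -
  have "map (\<lambda>i. \<alpha> i b b) [0..<n] = replicate n e"
    using assms by (simp add: alpha_diag list_eq_iff_nth_eq)
  then show ?thesis
    using theta_alpha[OF assms assms] by (simp add: theta_mult_def)
qed

lemma inv_coefficients_closed:
  "b \<in> A \<Longrightarrow> set (map (\<lambda>i. \<alpha> i e (\<theta> (replicate (Suc n) b))) [0..<n]) \<subseteq> A"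
  using theta_replicate_Suc_closed by (auto simp: alpha_closed e_closed simp del: replicate_Suc)

lemma theta_inv_closed: "b \<in> A \<Longrightarrow> theta_inv b \<in> A"
  unfolding theta_inv_def
  by (rule theta_closed) (simp_all add: inv_coefficients_closed del: set_map replicate_Suc)

lemma theta_inv_mult_left:
  assumes b: "b \<in> A"
  shows "theta_mult n \<theta> (theta_inv b) b = e"
proof -
  let ?as = "map (\<lambda>i. \<alpha> i e (\<theta> (replicate (Suc n) b))) [0..<n]"
  have "e = \<theta> (?as @ [\<theta> (replicate n b @ [b])])"
    using theta_alpha[OF e_closed theta_replicate_closed[OF b b]]
    by (simp add: replicate_append_same)
  also have "\<dots> = \<theta> (map (\<lambda>x. \<theta> (?as @ [x])) (replicate n b) @ [b])"
    using theta_two_assoc[of ?as "replicate n b" b] inv_coefficients_closed[OF b] b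
    by (simp add: replicate_subset)
  also have "\<dots> = theta_mult n \<theta> (theta_inv b) b"
    by (simp add: theta_mult_def theta_inv_def)
  finally show ?thesis by simp
qed

lemma group_theta_group: "group theta_group"
  unfolding theta_group_def
  by (rule groupI) (auto simp: theta_mult_closed theta_mult_assoc theta_mult_e_left
      e_closed intro: theta_inv_closed theta_inv_mult_left)

lemma inv_theta_group: "b \<in> A \<Longrightarrow> inv\<^bsub>theta_group\<^esub> b = theta_inv b"
  using group.inv_equality[OF group_theta_group, of "theta_inv b" b]
  by (simp add: theta_group_def theta_inv_closed theta_inv_mult_left)

end

theorem proposition4p3:
  fixes A :: "'a set" and \<theta> :: "'a list \<Rightarrow> 'a" and \<alpha> :: "nat \<Rightarrow> 'a \<Rightarrow> 'a \<Rightarrow> 'a"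
    and e :: 'a and n :: nat
  assumes "n \<ge> 1"
    and "e \<in> A"
    and "\<forall>xs. length xs = Suc n \<and> set xs \<subseteq> A \<longrightarrow> \<theta> xs \<in> A"
    and "\<forall>i<n. \<forall>a\<in>A. \<forall>b\<in>A. \<alpha> i a b \<in> A"
    and "\<forall>i<n. \<forall>a\<in>A. \<alpha> i a a = e"
    and "\<forall>a\<in>A. \<forall>b\<in>A. \<theta> (map (\<lambda>i. \<alpha> i a b) [0..<n] @ [b]) = a"
    and "\<forall>as bs c. length as = n \<and> length bs = n \<and> set as \<subseteq> A \<and> set bs \<subseteq> A \<and> c \<in> A \<longrightarrow>
           \<theta> (as @ [\<theta> (bs @ [c])]) = \<theta> (map (\<lambda>b. \<theta> (as @ [b])) bs @ [c])"
  shows "\<exists>u. group \<lparr>carrier = A, mult = theta_mult n \<theta>, one = u\<rparr> \<and>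
           (\<forall>b\<in>A. inv\<^bsub>\<lparr>carrier = A, mult = theta_mult n \<theta>, one = u\<rparr>\<^esub> b =
              \<theta> (map (\<lambda>i. \<alpha> i e (\<theta> (replicate (Suc n) b))) [0..<n] @ [b]))"
proof -
  interpret two_associative_with_division A \<theta> n \<alpha> e
    by unfold_locales (use assms(2-7) in blast)+
  show ?thesis
    using group_theta_group inv_theta_group
    unfolding theta_group_def theta_inv_def by blast
qed

end
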